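(* Let $C>0$ be a constant. There is a constant $C'>0$, depending only on $C$, such that the following holds. Let $n\ge 1$, let $P\in\mathbb{R}^{n\times n}$ be a matrix with non-negative entries, and let $w,v\in\mathbb{R}^n$ satisfy $\|w\|_\infty\le C n^{-1/2}$ and $\|v\|_\infty\le C n^{-1/2}$. Define $$L(w,v)=\langle w,Pv\rangle-\sum_{i=1}^n\log\Big(\sum_{j=1}^n\exp(w_iv_j)\Big).$$ Then $$\left| L(w,v)-\left(\langle w,Pv\rangle-\frac1n\Big(\sum_{i=1}^n w_i\Big)\Big(\sum_{j=1}^n v_j\Big)-\frac1n\sum_{i,j=1}^n\frac{w_i^2v_j^2}{2}-n\log n\right)\right|\le \frac{C'}{n}.$$
   Context: $\langle\cdot,\cdot\rangle$ is the standard inner product on $\mathbb{R}^n$ and $\|\cdot\|_\infty$ the maximum norm. The paper states the hypothesis as $\|v\|_\infty,\|w\|_\infty\lesssim n^{-1/2}$ and the conclusion with an error term $\mathcal{O}(n^{-1})$, where $\lesssim$ and $\mathcal{O}$ hide constants depending only on the implicit constant in the hypothesis. *)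

theory Defs
  imports Complex_Main
begin

text \<open>Vectors in R^n are functions nat => real, indices i < n (0-based);
  matrices are nat => nat => real with entries P i j, i, j < n.\<close>

definition inner_n :: "nat \<Rightarrow> (nat \<Rightarrow> real) \<Rightarrow> (nat \<Rightarrow> real) \<Rightarrow> real" where
  "inner_n n x y = (\<Sum>i<n. x i * y i)"

definition matvec_n :: "nat \<Rightarrow> (nat \<Rightarrow> nat \<Rightarrow> real) \<Rightarrow> (nat \<Rightarrow> real) \<Rightarrow> (nat \<Rightarrow> real)" where
  "matvec_n n P x = (\<lambda>i. \<Sum>j<n. P i j * x j)"

definition maxnorm_n :: "nat \<Rightarrow> (nat \<Rightarrow> real) \<Rightarrow> real" where
  "maxnorm_n n x = Max (insert 0 ((\<lambda>i. \<bar>x i\<bar>) ` {..<n}))"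

definition L_fun :: "nat \<Rightarrow> (nat \<Rightarrow> nat \<Rightarrow> real) \<Rightarrow> (nat \<Rightarrow> real) \<Rightarrow> (nat \<Rightarrow> real) \<Rightarrow> real" where
  "L_fun n P w v = inner_n n w (matvec_n n P v) - (\<Sum>i<n. ln (\<Sum>j<n. exp (w i * v j)))"

end

theory Submission
  imports Defs
begin

text \<open>Row \<open>i\<close> of the log-partition term is \<open>ln (\<Sum>j<n. exp (x j))\<close> with \<open>x j = w i * v j\<close>
  of size \<open>O(1/n)\<close>. Write the sum as \<open>n * u\<close>. By Taylor's theorem \<open>u = 1 + t + O(1/n^3)\<close>,
  where \<open>t\<close> is the mean of \<open>x + x\<^sup>2/2\<close>, and \<open>ln u = (u - 1) + O((u - 1)\<^sup>2) = t + O(1/n^2)\<close>.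
  Summing the \<open>n\<close> row errors gives \<open>O(1/n)\<close>, and the row means \<open>t\<close> add up exactly to
  the linear and quadratic correction terms.\<close>

lemma abs_exp_minus_taylor2_le:
  fixes x :: real
  shows "\<bar>exp x - 1 - x - x\<^sup>2 / 2\<bar> \<le> exp \<bar>x\<bar> * \<bar>x\<bar> ^ 3"
proof -
  obtain t where t: "\<bar>t\<bar> \<le> \<bar>x\<bar>" "exp x = (\<Sum>m<3. x ^ m / fact m) + exp t / fact 3 * x ^ 3"
    using Maclaurin_exp_le[of x 3] by blast
  have "(\<Sum>m<3. x ^ m / fact m) = 1 + x + x\<^sup>2 / 2"
    by (simp add: numeral_3_eq_3 fact_numeral power2_eq_square)
  with t(2) have "\<bar>exp x - 1 - x - x\<^sup>2 / 2\<bar> = exp t / 6 * \<bar>x\<bar> ^ 3"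
    by (simp add: fact_numeral abs_mult power_abs)
  also have "\<dots> \<le> exp \<bar>x\<bar> * \<bar>x\<bar> ^ 3"
  proof (rule mult_right_mono)
    have "exp t \<le> exp \<bar>x\<bar>"
      using t(1) by simp
    then show "exp t / 6 \<le> exp \<bar>x\<bar>"
      using exp_gt_zero[of t] by linarith
  qed simp
  finally show ?thesis .
qed

lemma abs_ln_minus_linear_le:
  fixes u :: real
  assumes "u > 0"
  shows "\<bar>ln u - (u - 1)\<bar> \<le> (u - 1)\<^sup>2 / u"
proof -
  have "ln u \<le> u - 1" "ln (1 / u) \<le> 1 / u - 1"
    using assms by (intro ln_le_minus_one; simp)+
  moreover have "(u - 1)\<^sup>2 / u = (u - 1) - (1 - 1 / u)"
    using assms by (simp add: field_simps power2_eq_square)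
  ultimately show ?thesis
    using assms by (simp add: ln_div)
qed

lemma abs_ln_minus_le:
  fixes u t r s \<delta> :: real
  assumes u: "exp (- \<delta>) \<le> u" and "\<bar>u - 1 - t\<bar> \<le> r" "\<bar>t\<bar> \<le> s"
  shows "\<bar>ln u - t\<bar> \<le> exp \<delta> * (s + r)\<^sup>2 + r"
proof -
  have u_pos: "u > 0"
    using u exp_gt_zero[of "- \<delta>"] by linarith
  have "\<bar>u - 1\<bar> \<le> s + r"
    using assms(2,3) by linarith
  then have "(u - 1)\<^sup>2 \<le> (s + r)\<^sup>2"
    by (metis abs_ge_zero power2_abs power_mono)
  moreover have "1 / u \<le> exp \<delta>"
    using u u_pos by (simp add: exp_minus field_simps)
  ultimately have "(u - 1)\<^sup>2 / u \<le> exp \<delta> * (s + r)\<^sup>2"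
    using u_pos mult_mono[of "(u - 1)\<^sup>2" "(s + r)\<^sup>2" "1 / u" "exp \<delta>"]
    by (simp add: mult.commute)
  then show ?thesis
    using abs_ln_minus_linear_le[OF u_pos] assms(2) by linarith
qed

lemma abs_mean_le:
  fixes f :: "'a \<Rightarrow> real"
  assumes "finite A" "A \<noteq> {}" "\<And>j. j \<in> A \<Longrightarrow> \<bar>f j\<bar> \<le> B"
  shows "\<bar>(\<Sum>j\<in>A. f j) / card A\<bar> \<le> B"
proof -
  have "\<bar>\<Sum>j\<in>A. f j\<bar> \<le> card A * B"
    by (rule order_trans[OF sum_abs sum_bounded_above]) (use assms(3) in auto)
  then show ?thesis
    using assms(1,2) by (simp add: pos_divide_le_eq card_gt_0_iff mult.commute)
qed

lemma ln_sum_exp_error_le: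
  fixes x :: "'a \<Rightarrow> real"
  assumes A: "finite A" "A \<noteq> {}"
    and x: "\<And>j. j \<in> A \<Longrightarrow> \<bar>x j\<bar> \<le> \<delta>"
  shows "\<bar>ln (\<Sum>j\<in>A. exp (x j)) - ln (card A) - (\<Sum>j\<in>A. x j + (x j)\<^sup>2 / 2) / card A\<bar>
           \<le> exp \<delta> * (\<delta> + \<delta>\<^sup>2 / 2 + exp \<delta> * \<delta> ^ 3)\<^sup>2 + exp \<delta> * \<delta> ^ 3"
proof -
  define u where "u = (\<Sum>j\<in>A. exp (x j)) / card A"
  define t where "t = (\<Sum>j\<in>A. x j + (x j)\<^sup>2 / 2) / card A"
  have card: "real (card A) > 0"
    using A by (simp add: card_gt_0_iff)
  have \<delta>: "0 \<le> \<delta>"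
    using x A by (meson abs_ge_zero all_not_in_conv order_trans)
  have "(\<Sum>j\<in>A. exp (x j) - 1 - x j - (x j)\<^sup>2 / 2)
      = (\<Sum>j\<in>A. exp (x j)) - card A - (\<Sum>j\<in>A. x j + (x j)\<^sup>2 / 2)"
    by (simp add: sum_subtractf sum.distrib algebra_simps)
  then have "u - 1 - t = (\<Sum>j\<in>A. exp (x j) - 1 - x j - (x j)\<^sup>2 / 2) / card A"
    using card by (simp add: u_def t_def diff_divide_distrib)
  also have "\<bar>\<dots>\<bar> \<le> exp \<delta> * \<delta> ^ 3"
  proof (rule abs_mean_le[OF A])
    fix j assume "j \<in> A"
    with x \<delta> have "exp \<bar>x j\<bar> * \<bar>x j\<bar> ^ 3 \<le> exp \<delta> * \<delta> ^ 3"
      by (intro mult_mono power_mono) auto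
    with abs_exp_minus_taylor2_le[of "x j"]
    show "\<bar>exp (x j) - 1 - x j - (x j)\<^sup>2 / 2\<bar> \<le> exp \<delta> * \<delta> ^ 3" by linarith
  qed
  finally have taylor: "\<bar>u - 1 - t\<bar> \<le> exp \<delta> * \<delta> ^ 3" .
  have t_bound: "\<bar>t\<bar> \<le> \<delta> + \<delta>\<^sup>2 / 2"
    unfolding t_def
  proof (rule abs_mean_le[OF A])
    fix j assume "j \<in> A"
    with x have "\<bar>x j\<bar> \<le> \<delta>" by blast
    moreover from this have "(x j)\<^sup>2 \<le> \<delta>\<^sup>2"
      by (metis abs_ge_zero power2_abs power_mono)
    ultimately show "\<bar>x j + (x j)\<^sup>2 / 2\<bar> \<le> \<delta> + \<delta>\<^sup>2 / 2"
      using abs_triangle_ineq[of "x j" "(x j)\<^sup>2 / 2"]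
      by (simp only: abs_divide abs_power2 abs_numeral)
  qed
  have "card A * exp (- \<delta>) \<le> (\<Sum>j\<in>A. exp (x j))"
    using sum_bounded_below[of A "exp (- \<delta>)" "\<lambda>j. exp (x j)"] x by (force simp: abs_le_iff)
  then have u_lower: "exp (- \<delta>) \<le> u"
    using card by (simp add: u_def field_simps)
  have "\<bar>ln u - t\<bar> \<le> exp \<delta> * (\<delta> + \<delta>\<^sup>2 / 2 + exp \<delta> * \<delta> ^ 3)\<^sup>2 + exp \<delta> * \<delta> ^ 3"
    by (rule abs_ln_minus_le[OF u_lower taylor t_bound])
  moreover have "ln (\<Sum>j\<in>A. exp (x j)) - ln (card A) = ln u"
    unfolding u_def using card sum_pos[OF A, of "\<lambda>j. exp (x j)"] by (simp add: ln_div)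
  ultimately show ?thesis
    by (simp add: t_def)
qed

definition ln_sum_exp_const :: "real \<Rightarrow> real" where
  "ln_sum_exp_const M = exp M * ((1 + M + exp M * M\<^sup>2)\<^sup>2 + M)"

lemma ln_sum_exp_const_pos: "M > 0 \<Longrightarrow> ln_sum_exp_const M > 0"
  unfolding ln_sum_exp_const_def by (intro mult_pos_pos add_nonneg_pos) auto

lemma ln_sum_exp_error_bound_le_quadratic:
  fixes \<delta> M :: real
  assumes "0 \<le> \<delta>" "\<delta> \<le> M"
  shows "exp \<delta> * (\<delta> + \<delta>\<^sup>2 / 2 + exp \<delta> * \<delta> ^ 3)\<^sup>2 + exp \<delta> * \<delta> ^ 3
           \<le> ln_sum_exp_const M * \<delta>\<^sup>2"
proof -
  have exp_mono: "exp \<delta> \<le> exp M" and M: "0 \<le> M"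
    using assms by auto
  have "\<delta> * \<delta> \<le> M * \<delta>"
    using assms by (intro mult_right_mono)
  then have square: "\<delta>\<^sup>2 \<le> M * \<delta>"
    by (simp add: power2_eq_square)
  have "\<delta>\<^sup>2 * \<delta> \<le> \<delta>\<^sup>2 * M"
    using assms by (intro mult_left_mono) auto
  then have "exp \<delta> * \<delta> ^ 3 \<le> exp M * (M * \<delta>\<^sup>2)"
    using assms(1) exp_mono
    by (intro mult_mono) (auto simp: power3_eq_cube power2_eq_square mult.commute)
  then have cube: "exp \<delta> * \<delta> ^ 3 \<le> exp M * M * \<delta>\<^sup>2"
    by (simp add: mult.assoc)
  also have "\<dots> \<le> exp M * M * (M * \<delta>)"
    using square M by (intro mult_left_mono) auto
  finally have "exp \<delta> * \<delta> ^ 3 \<le> exp M * M\<^sup>2 * \<delta>"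
    by (simp add: power2_eq_square mult.assoc)
  moreover have "\<delta>\<^sup>2 / 2 \<le> M * \<delta>"
    using square zero_le_power2[of \<delta>] by linarith
  ultimately have "\<delta> + \<delta>\<^sup>2 / 2 + exp \<delta> * \<delta> ^ 3 \<le> (1 + M + exp M * M\<^sup>2) * \<delta>"
    by (simp add: distrib_right)
  moreover have "0 \<le> \<delta> + \<delta>\<^sup>2 / 2 + exp \<delta> * \<delta> ^ 3"
    using assms(1) by simp
  ultimately have "(\<delta> + \<delta>\<^sup>2 / 2 + exp \<delta> * \<delta> ^ 3)\<^sup>2 \<le> (1 + M + exp M * M\<^sup>2)\<^sup>2 * \<delta>\<^sup>2"
    using power_mono[of _ "(1 + M + exp M * M\<^sup>2) * \<delta>" 2] by (simp add: power_mult_distrib)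
  then have "exp \<delta> * (\<delta> + \<delta>\<^sup>2 / 2 + exp \<delta> * \<delta> ^ 3)\<^sup>2
      \<le> exp M * ((1 + M + exp M * M\<^sup>2)\<^sup>2 * \<delta>\<^sup>2)"
    using exp_mono by (intro mult_mono) auto
  with cube show ?thesis
    by (simp add: ln_sum_exp_const_def algebra_simps)
qed

lemma abs_le_maxnorm_n:
  assumes "i < n"
  shows "\<bar>x i\<bar> \<le> maxnorm_n n x"
  unfolding maxnorm_n_def using assms by (intro Max_ge) auto

lemma L_fun_minus_expansion:
  "L_fun n P w v -
     (inner_n n w (matvec_n n P v)
      - (1 / real n) * (\<Sum>i<n. w i) * (\<Sum>j<n. v j)
      - (1 / real n) * (\<Sum>i<n. \<Sum>j<n. (w i)\<^sup>2 * (v j)\<^sup>2 / 2)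
      - real n * ln (real n))
   = - (\<Sum>i<n. ln (\<Sum>j<n. exp (w i * v j)) - ln (real n)
                 - (\<Sum>j<n. w i * v j + (w i * v j)\<^sup>2 / 2) / real n)"
proof -
  have "(\<Sum>i<n. \<Sum>j<n. w i * v j + (w i * v j)\<^sup>2 / 2)
      = (\<Sum>i<n. w i) * (\<Sum>j<n. v j) + (\<Sum>i<n. \<Sum>j<n. (w i)\<^sup>2 * (v j)\<^sup>2 / 2)"
    by (simp add: sum_product sum.distrib power_mult_distrib)
  then have "(\<Sum>i<n. (\<Sum>j<n. w i * v j + (w i * v j)\<^sup>2 / 2) / real n)
      = (1 / real n) * ((\<Sum>i<n. w i) * (\<Sum>j<n. v j) + (\<Sum>i<n. \<Sum>j<n. (w i)\<^sup>2 * (v j)\<^sup>2 / 2))"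
    by (simp add: sum_divide_distrib[symmetric])
  then show ?thesis
    unfolding L_fun_def by (simp add: sum_subtractf sum.distrib algebra_simps)
qed

lemma abs_mult_le_of_maxnorm_n_le:
  assumes "maxnorm_n n w \<le> C * real n powr (-1/2)" "maxnorm_n n v \<le> C * real n powr (-1/2)"
    and "i < n" "j < n"
  shows "\<bar>w i * v j\<bar> \<le> C\<^sup>2 / n"
proof -
  have "C * real n powr (-1/2) = C / sqrt n"
    using assms(3) by (simp add: powr_minus_divide powr_half_sqrt)
  then have "\<bar>w i\<bar> \<le> C / sqrt n" "\<bar>v j\<bar> \<le> C / sqrt n"
    using abs_le_maxnorm_n[OF assms(3), of w] abs_le_maxnorm_n[OF assms(4), of v] assms(1,2)
    by linarith+
  then have "\<bar>w i\<bar> * \<bar>v j\<bar> \<le> (C / sqrt n) * (C / sqrt n)"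
    by (intro mult_mono) auto
  then show ?thesis
    by (simp add: abs_mult power2_eq_square)
qed

lemma L_fun_approx_error_le:
  assumes n: "n \<ge> 1" and "M \<ge> 0"
    and entry: "\<And>i j. i < n \<Longrightarrow> j < n \<Longrightarrow> \<bar>w i * v j\<bar> \<le> M / n"
  shows "\<bar>L_fun n P w v -
           (inner_n n w (matvec_n n P v)
            - (1 / real n) * (\<Sum>i<n. w i) * (\<Sum>j<n. v j)
            - (1 / real n) * (\<Sum>i<n. \<Sum>j<n. (w i)\<^sup>2 * (v j)\<^sup>2 / 2)
            - real n * ln (real n))\<bar> \<le> ln_sum_exp_const M * M\<^sup>2 / n"
proof -
  have "M * 1 \<le> M * n"
    using assms by (intro mult_left_mono) auto
  then have "{..<n} \<noteq> {}" "0 \<le> M / n" "M / n \<le> M"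
    using assms by (auto simp: divide_le_eq lessThan_empty_iff)
  then have row: "\<bar>ln (\<Sum>j<n. exp (w i * v j)) - ln (real n)
                   - (\<Sum>j<n. w i * v j + (w i * v j)\<^sup>2 / 2) / real n\<bar>
                  \<le> ln_sum_exp_const M * (M / n)\<^sup>2" if "i < n" for i
    using order_trans[OF ln_sum_exp_error_le[of "{..<n}" "\<lambda>j. w i * v j" "M / n"]
        ln_sum_exp_error_bound_le_quadratic[of "M / n" M]] entry[OF that]
    by auto
  have "\<bar>\<Sum>i<n. ln (\<Sum>j<n. exp (w i * v j)) - ln (real n)
               - (\<Sum>j<n. w i * v j + (w i * v j)\<^sup>2 / 2) / real n\<bar>
        \<le> (\<Sum>i<n. ln_sum_exp_const M * (M / n)\<^sup>2)"
    by (rule order_trans[OF sum_abs sum_mono]) (use row in auto)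
  also have "\<dots> = ln_sum_exp_const M * M\<^sup>2 / n"
    using n by (simp add: power2_eq_square)
  finally show ?thesis
    unfolding L_fun_minus_expansion abs_minus_cancel .
qed

theorem theorem3p1:
  fixes C :: real
  assumes "C > 0"
  shows "\<exists>C'>0. \<forall>(n::nat) (P::nat \<Rightarrow> nat \<Rightarrow> real) (w::nat \<Rightarrow> real) (v::nat \<Rightarrow> real).
      n \<ge> 1 \<longrightarrow> (\<forall>i<n. \<forall>j<n. P i j \<ge> 0) \<longrightarrow>
      maxnorm_n n w \<le> C * real n powr (-1/2) \<longrightarrow>
      maxnorm_n n v \<le> C * real n powr (-1/2) \<longrightarrow>
      \<bar>L_fun n P w v -
         (inner_n n w (matvec_n n P v)
          - (1 / real n) * (\<Sum>i<n. w i) * (\<Sum>j<n. v j)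
          - (1 / real n) * (\<Sum>i<n. \<Sum>j<n. (w i)\<^sup>2 * (v j)\<^sup>2 / 2)
          - real n * ln (real n))\<bar> \<le> C' / real n"
proof -
  \<comment> \<open>The term \<open>inner_n n w (matvec_n n P v)\<close> cancels.\<close>
  have "ln_sum_exp_const (C\<^sup>2) * (C\<^sup>2)\<^sup>2 > 0"
    using assms by (simp add: ln_sum_exp_const_pos)
  then show ?thesis
    using L_fun_approx_error_le[of _ "C\<^sup>2"] abs_mult_le_of_maxnorm_n_le[of _ _ C]
    by (intro exI[of _ "ln_sum_exp_const (C\<^sup>2) * (C\<^sup>2)\<^sup>2"]) auto
qed

end
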